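(* Let $h_0>0$, $|h|\le h_0$, $U>0$, $k\ne0$, and let $A$ be an element of $\mathfrak A_X$ ($X\subset\Lambda$ finite) regarded as an operator on $\mathcal H^{\rm hf}_\Lambda$, of $D_\Lambda$-grade $k$, i.e. $A=A^{(k)}$ and $\mathrm{ad}_{D_\Lambda}(A)=kA$. Assume $|k|U>h_0|X|$ and define \[ \mathcal I_h(A):=\frac1{kU}\sum_{n\ge0}\Bigl(\frac h{kU}\Bigr)^n\mathrm{ad}_{M_\Lambda}^{\,n}(A). \] Then the series converges absolutely in operator norm and: (i) $\mathrm{ad}_{UD_\Lambda-hM_\Lambda}(\mathcal I_h(A))=A$; (ii) $\mathrm{ad}_{D_\Lambda}(\mathcal I_h(A))=k\,\mathcal I_h(A)$, in particular $(\mathcal I_h(A))^{\rm diag}=0$ and $(\mathcal I_h(A))^{\rm off}=\mathcal I_h(A)$; (iii) $\mathcal I_h(A)\in\mathfrak A_X$; (iv) $\|\mathcal I_h(A)\|\le\frac{1}{|k|U-|h||X|}\|A\|\le\frac1{|k|U-h_0|X|}\|A\|$; (v) $\mathcal I_h(A^* )=-(\mathcal I_h(A))^*$.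
   Context: $\Lambda=(\mathbb Z/L\mathbb Z)^d$, $L\in2\mathbb N$; fermionic Fock space over $\ell^2(\Lambda)\otimes\mathbb C^2$ with CAR operators $c_{x\sigma}$, $n_{x\sigma}=c^*_{x\sigma}c_{x\sigma}$, $n_x=n_{x\uparrow}+n_{x\downarrow}$; half-filled sector $\mathcal H^{\rm hf}_\Lambda=\ker(\sum_xn_x-|\Lambda|)$; $D_\Lambda=\sum_xn_{x\uparrow}n_{x\downarrow}$; $\eta_x=(-1)^{x_1+\dots+x_d}$, $M_\Lambda=\sum_x\eta_x\frac12(n_{x\uparrow}-n_{x\downarrow})$; $\mathfrak A_X$ the algebra generated by $c_{x\sigma},c^*_{x\sigma}$, $x\in X$; $\mathrm{ad}_S(A)=[S,A]$. $P_m$ is the spectral projection of $D_\Lambda$ on $\mathcal H^{\rm hf}_\Lambda$ for eigenvalue $m$ ($P_m=0$ if $m<0$ or not an eigenvalue), $B^{(k)}=\sum_{m\ge0}P_{m+k}BP_m$, $B^{\rm diag}=B^{(0)}$, $B^{\rm off}=\sum_{k\ne0}B^{(k)}$. *)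

theory Defs
  imports "HOL-Analysis.Analysis" "HOL-Library.Function_Algebras"
    "HOL-Library.List_Lexorder"
begin

text \<open>Sites of the torus (Z/LZ)^d are lists of length d with entries in {0..<L}.
  A mode is a pair (site, spin) with spin True = up, False = down.
  The fermionic Fock space over l2(Lambda) x C^2 is realised concretely in its
  occupation-number basis: basis vectors are indexed by configurations,
  i.e. sets of occupied modes.  Operators are matrices indexed by configurations
  (entries outside the configuration set are irrelevant and kept zero).\<close>

type_synonym site = "nat list"
type_synonym mode = "site \<times> bool"
type_synonym cfg = "mode set"
type_synonym op = "cfg \<Rightarrow> cfg \<Rightarrow> complex"

definition Lam :: "nat \<Rightarrow> nat \<Rightarrow> site set" where
  "Lam d L = {x. length x = d \<and> (\<forall>i\<in>set x. i < L)}"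

definition modes :: "nat \<Rightarrow> nat \<Rightarrow> mode set" where
  "modes d L = Lam d L \<times> (UNIV :: bool set)"

definition cfgs :: "nat \<Rightarrow> nat \<Rightarrow> cfg set" where
  "cfgs d L = Pow (modes d L)"

definition opmul :: "cfg set \<Rightarrow> op \<Rightarrow> op \<Rightarrow> op" where
  "opmul F A B = (\<lambda>S T. \<Sum>R\<in>F. A S R * B R T)"

definition opscale :: "complex \<Rightarrow> op \<Rightarrow> op" where
  "opscale c A = (\<lambda>S T. c * A S T)"

definition idop :: "cfg set \<Rightarrow> op" where
  "idop F = (\<lambda>S T. if S = T \<and> S \<in> F then 1 else 0)"

definition adj :: "op \<Rightarrow> op" where
  "adj A = (\<lambda>S T. cnj (A T S))"

definition ad :: "cfg set \<Rightarrow> op \<Rightarrow> op \<Rightarrow> op" where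
  "ad F S A = opmul F S A - opmul F A S"

definition opnorm :: "cfg set \<Rightarrow> op \<Rightarrow> real" where
  "opnorm V B = Sup ((\<lambda>v. sqrt (\<Sum>S\<in>V. (cmod (\<Sum>T\<in>V. B S T * v T))\<^sup>2))
                     ` {v. (\<Sum>T\<in>V. (cmod (v T))\<^sup>2) \<le> 1})"

text \<open>Fixed total order on modes used for the Jordan-Wigner signs:
  lexicographic on (site, spin).\<close>
definition mode_less :: "mode \<Rightarrow> mode \<Rightarrow> bool" where
  "mode_less m m' = (fst m < fst m' \<or> (fst m = fst m' \<and> snd m < snd m'))"

text \<open>CAR annihilation operators (Jordan-Wigner sign w.r.t. the lexicographic
  order on modes): c_m |T> = (-1)^{#{m' in T. m' < m}} |T - {m}> if m in T, else 0.\<close>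
definition cop :: "nat \<Rightarrow> nat \<Rightarrow> mode \<Rightarrow> op" where
  "cop d L m = (\<lambda>S T. if T \<in> cfgs d L \<and> m \<in> modes d L \<and> m \<in> T \<and> S = T - {m}
                     then (-1) ^ card {m'\<in>T. mode_less m' m} else 0)"

definition nop :: "nat \<Rightarrow> nat \<Rightarrow> mode \<Rightarrow> op" where
  "nop d L m = opmul (cfgs d L) (adj (cop d L m)) (cop d L m)"

definition Dop :: "nat \<Rightarrow> nat \<Rightarrow> op" where
  "Dop d L = (\<Sum>x\<in>Lam d L. opmul (cfgs d L) (nop d L (x, True)) (nop d L (x, False)))"

definition eta :: "site \<Rightarrow> complex" where
  "eta x = (-1) ^ sum_list x"

definition Mop :: "nat \<Rightarrow> nat \<Rightarrow> op" where
  "Mop d L = (\<Sum>x\<in>Lam d L. opscale (eta x / 2) (nop d L (x, True) - nop d L (x, False)))"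

inductive_set alg :: "nat \<Rightarrow> nat \<Rightarrow> site set \<Rightarrow> op set" for d L X where
  gen_c: "x \<in> X \<Longrightarrow> cop d L (x, s) \<in> alg d L X"
| gen_cstar: "x \<in> X \<Longrightarrow> adj (cop d L (x, s)) \<in> alg d L X"
| unit: "idop (cfgs d L) \<in> alg d L X"
| add: "A \<in> alg d L X \<Longrightarrow> B \<in> alg d L X \<Longrightarrow> A + B \<in> alg d L X"
| scale: "A \<in> alg d L X \<Longrightarrow> opscale c A \<in> alg d L X"
| mult: "A \<in> alg d L X \<Longrightarrow> B \<in> alg d L X \<Longrightarrow> opmul (cfgs d L) A B \<in> alg d L X"

text \<open>Half-filled sector: the basis configurations with total particle number |Lambda|
  (these span ker(N - |Lambda|)).  hfop B = Q B Q is B regarded as an operator on it.\<close>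
definition hfcfgs :: "nat \<Rightarrow> nat \<Rightarrow> cfg set" where
  "hfcfgs d L = {S \<in> cfgs d L. card S = card (Lam d L)}"

definition hfop :: "nat \<Rightarrow> nat \<Rightarrow> op \<Rightarrow> op" where
  "hfop d L B = (\<lambda>S T. if S \<in> hfcfgs d L \<and> T \<in> hfcfgs d L then B S T else 0)"

text \<open>Spectral projection P_m of D on the half-filled sector (D is diagonal in
  the configuration basis), the set of its eigenvalues there, and the grading.\<close>
definition Dspec :: "nat \<Rightarrow> nat \<Rightarrow> int set" where
  "Dspec d L = {m. 0 \<le> m \<and> (\<exists>S\<in>hfcfgs d L. Dop d L S S = of_int m)}"

definition Pproj :: "nat \<Rightarrow> nat \<Rightarrow> int \<Rightarrow> op" where
  "Pproj d L m = (\<lambda>S T. if S = T \<and> S \<in> hfcfgs d L \<and> 0 \<le> m \<and> Dop d L S S = of_int m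
                         then 1 else 0)"

definition grade :: "nat \<Rightarrow> nat \<Rightarrow> int \<Rightarrow> op \<Rightarrow> op" where
  "grade d L k B = (\<Sum>m\<in>Dspec d L.
      opmul (cfgs d L) (Pproj d L (m + k)) (opmul (cfgs d L) B (Pproj d L m)))"

definition diagpart :: "nat \<Rightarrow> nat \<Rightarrow> op \<Rightarrow> op" where
  "diagpart d L B = grade d L 0 B"

definition offpart :: "nat \<Rightarrow> nat \<Rightarrow> op \<Rightarrow> op" where
  "offpart d L B = (\<Sum>k\<in>{a - b | a b. a \<in> Dspec d L \<and> b \<in> Dspec d L} - {0}. grade d L k B)"

text \<open>I_h(B) = 1/(kU) sum_n (h/(kU))^n ad_M^n(B), with M regarded on the half-filled
  sector; the series is taken entrywise.\<close>
definition Iterm :: "nat \<Rightarrow> nat \<Rightarrow> int \<Rightarrow> real \<Rightarrow> real \<Rightarrow> op \<Rightarrow> nat \<Rightarrow> op" where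
  "Iterm d L k h U B n = opscale (complex_of_real (1 / (real_of_int k * U) * (h / (real_of_int k * U)) ^ n))
       ((ad (cfgs d L) (hfop d L (Mop d L)) ^^ n) B)"

definition Ih :: "nat \<Rightarrow> nat \<Rightarrow> int \<Rightarrow> real \<Rightarrow> real \<Rightarrow> op \<Rightarrow> op" where
  "Ih d L k h U B = (\<lambda>S T. \<Sum>n. Iterm d L k h U B n S T)"

end

theory Submission
  imports Defs
begin

(* D and M are diagonal in the occupation-number basis, so ad_M multiplies the (S, T) entry of
   an operator by the jump m(S) - m(T) of the staggered magnetisation, and the series defining
   I_h(A) is an entrywise Neumann series with sum A_ST / (kU - h (m(S) - m(T))).  Elements of
   the algebra of X only connect configurations that agree outside X, on which this jump equals
   the jump of M_X and is at most |X|.  Properties (i), (ii) and (v) are then entrywise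
   identities, using that the D-grade k is the jump of the double occupancy.  For (iii), on the
   finitely many values of the jump, 1 / (kU - h z) agrees with a Lagrange polynomial in z, and
   polynomials in ad_{M_X} preserve the algebra because M_X belongs to it.  For (iv),
   kU I_h(A) = A + h [M_X, I_h(A)] and the commutator with M_X has norm at most |X| times the
   norm of its argument. *)

lemma finite_Lam: "finite (Lam d L)"
proof -
  have "Lam d L = {xs. set xs \<subseteq> {0..<L} \<and> length xs = d}"
    unfolding Lam_def by auto
  then show ?thesis
    using finite_lists_length_eq[of "{0..<L}" d] by simp
qed

lemma finite_cfgs: "finite (cfgs d L)"
  unfolding cfgs_def modes_def using finite_Lam by simp

lemma hfcfgs_subset_cfgs: "hfcfgs d L \<subseteq> cfgs d L"
  unfolding hfcfgs_def by auto

lemma finite_hfcfgs: "finite (hfcfgs d L)"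
  using finite_subset[OF hfcfgs_subset_cfgs finite_cfgs] .

lemma mem_modes_iff [simp]: "(x, s) \<in> modes d L \<longleftrightarrow> x \<in> Lam d L"
  unfolding modes_def by auto

lemma sum_op_apply: "(\<Sum>x\<in>A. (f x :: op)) S T = (\<Sum>x\<in>A. f x S T)"
  by (induction A rule: infinite_finite_induct) auto

definition diagop :: "cfg set \<Rightarrow> (cfg \<Rightarrow> complex) \<Rightarrow> op" where
  "diagop F f = (\<lambda>S T. if S = T \<and> S \<in> F then f S else 0)"

lemma opmul_diagop_left:
  assumes "finite F'" "F \<subseteq> F'"
  shows "opmul F' (diagop F f) B S T = (if S \<in> F then f S * B S T else 0)"
proof -
  have "opmul F' (diagop F f) B S T
      = (\<Sum>R\<in>F'. if R = S then (if S \<in> F then f S * B S T else 0) else 0)"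
    unfolding opmul_def diagop_def by (intro sum.cong) auto
  then show ?thesis
    using assms by (auto simp: sum.delta')
qed

lemma opmul_diagop_right:
  assumes "finite F'" "F \<subseteq> F'"
  shows "opmul F' B (diagop F f) S T = (if T \<in> F then B S T * f T else 0)"
proof -
  have "opmul F' B (diagop F f) S T
      = (\<Sum>R\<in>F'. if R = T then (if T \<in> F then B S T * f T else 0) else 0)"
    unfolding opmul_def diagop_def by (intro sum.cong) auto
  then show ?thesis
    using assms by (auto simp: sum.delta')
qed

lemma opmul_diagop_diagop:
  assumes "finite F'" "F \<subseteq> F'"
  shows "opmul F' (diagop F f) (diagop F g) = diagop F (\<lambda>S. f S * g S)"
  by (intro ext) (subst opmul_diagop_left[OF assms], simp add: diagop_def)

lemma ad_diagop:
  assumes "finite F'" "F \<subseteq> F'"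
  shows "ad F' (diagop F f) B S T
    = ((if S \<in> F then f S else 0) - (if T \<in> F then f T else 0)) * B S T"
  unfolding ad_def fun_diff_def
  by (simp add: opmul_diagop_left[OF assms] opmul_diagop_right[OF assms] algebra_simps)

lemma ad_diagop_funpow:
  assumes "finite F'" "F \<subseteq> F'"
  shows "(ad F' (diagop F f) ^^ n) B S T
    = ((if S \<in> F then f S else 0) - (if T \<in> F then f T else 0)) ^ n * B S T"
  by (induction n arbitrary: S T) (simp_all add: ad_diagop[OF assms])

lemma hfop_diagop: "hfcfgs d L \<subseteq> F \<Longrightarrow> hfop d L (diagop F f) = diagop (hfcfgs d L) f"
  unfolding hfop_def diagop_def by (intro ext) auto

lemma hfop_adj: "hfop d L (adj A) = adj (hfop d L A)"
  unfolding hfop_def adj_def by (intro ext) auto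

definition double_occ :: "nat \<Rightarrow> nat \<Rightarrow> cfg \<Rightarrow> nat" where
  "double_occ d L S = card {x\<in>Lam d L. (x, True) \<in> S \<and> (x, False) \<in> S}"

definition stag_mag :: "site set \<Rightarrow> cfg \<Rightarrow> real" where
  "stag_mag Y S =
     (\<Sum>x\<in>Y. (-1) ^ sum_list x / 2 * (of_bool ((x, True) \<in> S) - of_bool ((x, False) \<in> S)))"

definition Mloc :: "nat \<Rightarrow> nat \<Rightarrow> site set \<Rightarrow> op" where
  "Mloc d L Y = (\<Sum>x\<in>Y. opscale (eta x / 2) (nop d L (x, True) - nop d L (x, False)))"

lemma Mop_eq_Mloc: "Mop d L = Mloc d L (Lam d L)"
  unfolding Mop_def Mloc_def ..

lemma nop_eq_diagop: "nop d L m = diagop (cfgs d L) (\<lambda>S. of_bool (m \<in> modes d L \<and> m \<in> S))"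
proof (intro ext)
  fix S T
  let ?c = "cop d L m"
  have "nop d L m S T = (\<Sum>R\<in>cfgs d L. cnj (?c R S) * ?c R T)"
    unfolding nop_def opmul_def adj_def by simp
  also have "\<dots> = (\<Sum>R\<in>cfgs d L. if R = S - {m} then
        (if S \<in> cfgs d L \<and> m \<in> modes d L \<and> m \<in> S then cnj (?c R S) * ?c R T else 0) else 0)"
    by (intro sum.cong) (auto simp: cop_def)
  also have "\<dots> = (if S \<in> cfgs d L \<and> m \<in> modes d L \<and> m \<in> S
      then cnj (?c (S - {m}) S) * ?c (S - {m}) T else 0)"
  proof -
    have "S \<in> cfgs d L \<Longrightarrow> S - {m} \<in> cfgs d L" unfolding cfgs_def by auto
    then show ?thesis by (auto simp: sum.delta' finite_cfgs)
  qed
  also have "\<dots> = diagop (cfgs d L) (\<lambda>S. of_bool (m \<in> modes d L \<and> m \<in> S)) S T"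
  proof -
    have "m \<in> S \<Longrightarrow> m \<in> T \<Longrightarrow> S - {m} = T - {m} \<Longrightarrow> S = T" by blast
    moreover have "cnj ((-1::complex) ^ n) * (-1) ^ n = 1" for n :: nat
      by (simp flip: power_mult_distrib)
    ultimately show ?thesis
      unfolding diagop_def cop_def by auto
  qed
  finally show "nop d L m S T = diagop (cfgs d L) (\<lambda>S. of_bool (m \<in> modes d L \<and> m \<in> S)) S T" .
qed

lemma Dop_eq_diagop: "Dop d L = diagop (cfgs d L) (\<lambda>S. of_nat (double_occ d L S))"
proof (intro ext)
  fix S T
  have "Dop d L S T = (\<Sum>x\<in>Lam d L.
      diagop (cfgs d L) (\<lambda>S. of_bool ((x, True) \<in> S \<and> (x, False) \<in> S)) S T)"
    unfolding Dop_def sum_op_apply nop_eq_diagop opmul_diagop_diagop[OF finite_cfgs order_refl]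
    by (intro sum.cong refl) (auto simp: diagop_def)
  also have "\<dots> = diagop (cfgs d L) (\<lambda>S. of_nat (double_occ d L S)) S T"
    unfolding diagop_def double_occ_def
    by (auto simp: sum.inter_filter[symmetric] finite_Lam of_bool_def)
  finally show "Dop d L S T = diagop (cfgs d L) (\<lambda>S. of_nat (double_occ d L S)) S T" .
qed

lemma Mloc_eq_diagop:
  assumes "Y \<subseteq> Lam d L"
  shows "Mloc d L Y = diagop (cfgs d L) (\<lambda>S. of_real (stag_mag Y S))"
proof (intro ext)
  fix S T
  have "Mloc d L Y S T = (\<Sum>x\<in>Y. diagop (cfgs d L) (\<lambda>S. of_real ((-1) ^ sum_list x / 2 *
      (of_bool ((x, True) \<in> S) - of_bool ((x, False) \<in> S)))) S T)"
    unfolding Mloc_def sum_op_apply nop_eq_diagop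
    using assms by (intro sum.cong refl) (auto simp: opscale_def diagop_def eta_def)
  also have "\<dots> = diagop (cfgs d L) (\<lambda>S. of_real (stag_mag Y S)) S T"
    unfolding diagop_def stag_mag_def by (cases "S = T"; cases "S \<in> cfgs d L") simp_all
  finally show "Mloc d L Y S T = diagop (cfgs d L) (\<lambda>S. of_real (stag_mag Y S)) S T" .
qed

lemma abs_stag_mag_le: "\<bar>stag_mag Y S\<bar> \<le> real (card Y) / 2"
proof (cases "finite Y")
  case True
  have "\<bar>stag_mag Y S\<bar>
      \<le> (\<Sum>x\<in>Y. \<bar>(-1::real) ^ sum_list x / 2
          * (of_bool ((x, True) \<in> S) - of_bool ((x, False) \<in> S))\<bar>)"
    unfolding stag_mag_def by (rule sum_abs)
  also have "\<dots> \<le> (\<Sum>x\<in>Y. 1 / 2)"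
    by (intro sum_mono) (auto simp: abs_mult power_abs)
  finally show ?thesis
    using True by simp
qed (simp add: stag_mag_def)

lemma abs_stag_mag_diff_le: "\<bar>stag_mag Y S - stag_mag Y T\<bar> \<le> real (card Y)"
  using abs_stag_mag_le[of Y S] abs_stag_mag_le[of Y T] by linarith

section \<open>Locality\<close>

definition local_op :: "nat \<Rightarrow> nat \<Rightarrow> site set \<Rightarrow> op \<Rightarrow> bool" where
  "local_op d L X B \<longleftrightarrow> (\<forall>S T. B S T \<noteq> 0 \<longrightarrow>
     S \<in> cfgs d L \<and> T \<in> cfgs d L \<and> S - X \<times> UNIV = T - X \<times> UNIV)"

lemma alg_local_op: "A \<in> alg d L X \<Longrightarrow> local_op d L X A"
proof (induction rule: alg.induct)
  case (gen_c x s)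
  then show ?case unfolding local_op_def cop_def cfgs_def by auto
next
  case (gen_cstar x s)
  then show ?case unfolding local_op_def cop_def cfgs_def adj_def by auto
next
  case unit
  then show ?case unfolding local_op_def idop_def by auto
next
  case (add A B)
  then show ?case unfolding local_op_def by (metis add.right_neutral plus_fun_def)
next
  case (scale A c)
  then show ?case unfolding local_op_def opscale_def by auto
next
  case (mult A B)
  show ?case unfolding local_op_def
  proof (intro allI impI)
    fix S T
    assume "opmul (cfgs d L) A B S T \<noteq> 0"
    then obtain R where "A S R * B R T \<noteq> 0"
      unfolding opmul_def by (meson sum.neutral)
    then show "S \<in> cfgs d L \<and> T \<in> cfgs d L \<and> S - X \<times> UNIV = T - X \<times> UNIV"
      using mult.IH unfolding local_op_def by (metis mult_eq_0_iff)
  qed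
qed

lemma local_op_adj: "local_op d L X A \<Longrightarrow> local_op d L X (adj A)"
  unfolding local_op_def adj_def by (metis complex_cnj_zero)

lemma stag_mag_diff_eq_local:
  assumes "X \<subseteq> Lam d L" "S - X \<times> UNIV = T - X \<times> UNIV"
  shows "stag_mag (Lam d L) S - stag_mag (Lam d L) T = stag_mag X S - stag_mag X T"
proof -
  let ?t = "\<lambda>S x. (-1::real) ^ sum_list x / 2
    * (of_bool ((x, True) \<in> S) - of_bool ((x, False) \<in> S))"
  have "stag_mag (Lam d L) S - stag_mag (Lam d L) T = (\<Sum>x\<in>Lam d L. ?t S x - ?t T x)"
    unfolding stag_mag_def by (simp add: sum_subtractf)
  also have "\<dots> = (\<Sum>x\<in>Lam d L - X. ?t S x - ?t T x) + (\<Sum>x\<in>X. ?t S x - ?t T x)"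
    using sum.subset_diff[OF assms(1) finite_Lam] .
  also have "(\<Sum>x\<in>Lam d L - X. ?t S x - ?t T x) = 0"
  proof (intro sum.neutral ballI)
    fix x
    assume "x \<in> Lam d L - X"
    then have "((x, s) \<in> S) = ((x, s) \<in> T)" for s
      using assms(2) by blast
    then show "?t S x - ?t T x = 0" by simp
  qed
  finally show ?thesis
    unfolding stag_mag_def by (simp add: sum_subtractf)
qed

lemma hfop_Dop_eq_diagop: "hfop d L (Dop d L) = diagop (hfcfgs d L) (\<lambda>S. of_nat (double_occ d L S))"
  unfolding Dop_eq_diagop by (rule hfop_diagop[OF hfcfgs_subset_cfgs])

lemma ad_hfop_Dop_eq_scale_iff:
  assumes "\<And>S T. B S T \<noteq> 0 \<Longrightarrow> S \<in> hfcfgs d L \<and> T \<in> hfcfgs d L"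
  shows "ad (cfgs d L) (hfop d L (Dop d L)) B = opscale (of_int k) B
    \<longleftrightarrow> (\<forall>S T. B S T \<noteq> 0 \<longrightarrow> int (double_occ d L S) - int (double_occ d L T) = k)"
proof -
  have "ad (cfgs d L) (hfop d L (Dop d L)) B S T = opscale (of_int k) B S T
      \<longleftrightarrow> (B S T \<noteq> 0 \<longrightarrow> int (double_occ d L S) - int (double_occ d L T) = k)" for S T
  proof (cases "B S T = 0")
    case False
    then have "(of_nat (double_occ d L S) - of_nat (double_occ d L T)) * B S T = of_int k * B S T
        \<longleftrightarrow> (of_int (int (double_occ d L S) - int (double_occ d L T)) :: complex) = of_int k"
      by simp
    then show ?thesis
      using assms[OF False] False
      unfolding hfop_Dop_eq_diagop ad_diagop[OF finite_cfgs hfcfgs_subset_cfgs]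
      by (simp add: opscale_def del: of_int_diff)
  qed (simp add: hfop_Dop_eq_diagop ad_diagop[OF finite_cfgs hfcfgs_subset_cfgs] opscale_def)
  then show ?thesis
    by (auto simp: fun_eq_iff)
qed

lemma Dop_diag_eq_of_int_iff:
  assumes "S \<in> hfcfgs d L"
  shows "Dop d L S S = of_int m \<longleftrightarrow> int (double_occ d L S) = m"
proof -
  have "Dop d L S S = of_int (int (double_occ d L S))"
    using assms hfcfgs_subset_cfgs unfolding Dop_eq_diagop diagop_def by auto
  then show ?thesis
    by (metis of_int_eq_iff)
qed

lemma Pproj_eq_diagop:
  "Pproj d L m = diagop (hfcfgs d L) (\<lambda>S. of_bool (0 \<le> m \<and> int (double_occ d L S) = m))"
  unfolding Pproj_def diagop_def by (intro ext) (auto simp: Dop_diag_eq_of_int_iff)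

lemma Dspec_eq: "Dspec d L = (\<lambda>S. int (double_occ d L S)) ` hfcfgs d L"
  unfolding Dspec_def by (auto simp: Dop_diag_eq_of_int_iff image_iff)

lemma finite_Dspec: "finite (Dspec d L)"
  unfolding Dspec_eq using finite_hfcfgs by simp

lemma double_occ_mem_Dspec: "S \<in> hfcfgs d L \<Longrightarrow> int (double_occ d L S) \<in> Dspec d L"
  unfolding Dspec_eq by simp

lemma grade_apply:
  "grade d L k B S T = (if S \<in> hfcfgs d L \<and> T \<in> hfcfgs d L
      \<and> int (double_occ d L S) = int (double_occ d L T) + k then B S T else 0)"
proof -
  have "grade d L k B S T = (\<Sum>m\<in>Dspec d L. if m = int (double_occ d L T) then
      (if S \<in> hfcfgs d L \<and> T \<in> hfcfgs d L
        \<and> int (double_occ d L S) = int (double_occ d L T) + k then B S T else 0) else 0)"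
    unfolding grade_def sum_op_apply Pproj_eq_diagop
    by (intro sum.cong refl)
      (auto simp: opmul_diagop_left[OF finite_cfgs hfcfgs_subset_cfgs]
        opmul_diagop_right[OF finite_cfgs hfcfgs_subset_cfgs])
  also have "\<dots> = (if S \<in> hfcfgs d L \<and> T \<in> hfcfgs d L
      \<and> int (double_occ d L S) = int (double_occ d L T) + k then B S T else 0)"
    using double_occ_mem_Dspec[of T d L] by (auto simp: sum.delta' finite_Dspec)
  finally show ?thesis .
qed

section \<open>The entries of I_h\<close>

lemma ad_Mop_funpow_hfop:
  assumes "X \<subseteq> Lam d L" "local_op d L X A"
  shows "(ad (cfgs d L) (hfop d L (Mop d L)) ^^ n) (hfop d L A)
    = (\<lambda>S T. of_real (stag_mag X S - stag_mag X T) ^ n * hfop d L A S T)"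
proof (intro ext)
  fix S T
  show "(ad (cfgs d L) (hfop d L (Mop d L)) ^^ n) (hfop d L A) S T
      = of_real (stag_mag X S - stag_mag X T) ^ n * hfop d L A S T"
  proof (cases "hfop d L A S T = 0")
    case False
    then have "S \<in> hfcfgs d L" "T \<in> hfcfgs d L" "A S T \<noteq> 0"
      unfolding hfop_def by (auto split: if_splits)
    moreover have "stag_mag (Lam d L) S - stag_mag (Lam d L) T = stag_mag X S - stag_mag X T"
      using assms \<open>A S T \<noteq> 0\<close> by (intro stag_mag_diff_eq_local) (auto simp: local_op_def)
    ultimately show ?thesis
      unfolding Mop_eq_Mloc Mloc_eq_diagop[OF order_refl] hfop_diagop[OF hfcfgs_subset_cfgs]
        ad_diagop_funpow[OF finite_cfgs hfcfgs_subset_cfgs] by (simp flip: of_real_diff)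
  qed (simp add: Mop_eq_Mloc Mloc_eq_diagop hfop_diagop[OF hfcfgs_subset_cfgs]
        ad_diagop_funpow[OF finite_cfgs hfcfgs_subset_cfgs])
qed

lemma neumann_series_sums:
  fixes K h \<delta> :: real and a :: complex
  assumes "\<bar>h * \<delta>\<bar> < \<bar>K\<bar>"
  shows "(\<lambda>n. of_real (1 / K * (h / K) ^ n) * of_real \<delta> ^ n * a) sums (a / of_real (K - h * \<delta>))"
proof -
  have "K \<noteq> 0" "K - h * \<delta> \<noteq> 0"
    using assms by auto
  let ?w = "complex_of_real (h * \<delta> / K)"
  have "norm ?w = \<bar>h * \<delta>\<bar> / \<bar>K\<bar>"
    by (simp only: norm_of_real abs_divide)
  then have "norm ?w < 1"
    using assms by simp
  then have geometric:
    "(\<lambda>n. (of_real (1 / K) * a) * ?w ^ n) sums ((of_real (1 / K) * a) * (1 / (1 - ?w)))"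
    by (intro sums_mult geometric_sums)
  have "(of_real (1 / K) * a) * (1 / (1 - ?w)) = a / of_real (K - h * \<delta>)"
    using \<open>K \<noteq> 0\<close> \<open>K - h * \<delta> \<noteq> 0\<close> by (simp add: field_simps)
  moreover have "(\<lambda>n. (of_real (1 / K) * a) * ?w ^ n)
      = (\<lambda>n. of_real (1 / K * (h / K) ^ n) * of_real \<delta> ^ n * a)"
    by (intro ext) (simp add: power_mult_distrib power_divide algebra_simps)
  ultimately show ?thesis
    using geometric by metis
qed

lemma resolvent_eq:
  fixes K h \<delta> :: real and a :: complex
  assumes "K \<noteq> 0" "K - h * \<delta> \<noteq> 0"
  shows "a / of_real (K - h * \<delta>)
    = of_real (1 / K) * (a + of_real h * (of_real \<delta> * (a / of_real (K - h * \<delta>))))"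
proof -
  let ?w = "complex_of_real (K - h * \<delta>)"
  have "?w \<noteq> 0"
    using assms(2) by (simp del: of_real_diff of_real_mult)
  have "a + of_real h * (of_real \<delta> * (a / ?w)) = (?w + of_real h * of_real \<delta>) * (a / ?w)"
    using \<open>?w \<noteq> 0\<close> by (simp add: field_simps del: of_real_diff of_real_mult)
  also have "?w + of_real h * of_real \<delta> = of_real K"
    by simp
  finally show ?thesis
    using assms(1) by (simp del: of_real_diff of_real_mult)
qed

lemma abs_mult_stag_mag_diff_less:
  assumes "\<bar>h\<bar> * real (card X) < real_of_int \<bar>k\<bar> * U"
  shows "\<bar>h * (stag_mag X S - stag_mag X T)\<bar> < \<bar>real_of_int k * U\<bar>"
proof -
  have "0 < real_of_int \<bar>k\<bar> * U"
    using assms by (meson abs_ge_zero le_less_trans mult_nonneg_nonneg of_nat_0_le_iff)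
  then have "U > 0"
    by (simp add: zero_less_mult_iff)
  have "\<bar>h * (stag_mag X S - stag_mag X T)\<bar> \<le> \<bar>h\<bar> * real (card X)"
    unfolding abs_mult by (intro mult_left_mono abs_stag_mag_diff_le) simp
  also have "\<dots> < \<bar>real_of_int k * U\<bar>"
    using assms \<open>U > 0\<close> by (simp add: abs_mult)
  finally show ?thesis .
qed

lemma Ih_eq:
  assumes "X \<subseteq> Lam d L" "local_op d L X A"
    and "\<bar>h\<bar> * real (card X) < real_of_int \<bar>k\<bar> * U"
  shows "Ih d L k h U (hfop d L A)
    = (\<lambda>S T. hfop d L A S T / of_real (real_of_int k * U - h * (stag_mag X S - stag_mag X T)))"
proof (intro ext)
  fix S T
  have "Iterm d L k h U (hfop d L A) n S T
      = of_real (1 / (real_of_int k * U) * (h / (real_of_int k * U)) ^ n)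
        * of_real (stag_mag X S - stag_mag X T) ^ n * hfop d L A S T" for n
    unfolding Iterm_def ad_Mop_funpow_hfop[OF assms(1,2)] by (simp add: opscale_def)
  then show "Ih d L k h U (hfop d L A) S T
      = hfop d L A S T / of_real (real_of_int k * U - h * (stag_mag X S - stag_mag X T))"
    unfolding Ih_def using neumann_series_sums[OF abs_mult_stag_mag_diff_less[OF assms(3)]]
    by (simp add: sums_iff)
qed

section \<open>Multipliers preserving the local algebra\<close>

lemma zero_in_alg: "(0::op) \<in> alg d L X"
proof -
  have "(0::op) = opscale 0 (idop (cfgs d L))"
    by (intro ext) (simp add: opscale_def)
  then show ?thesis
    using alg.unit alg.scale by metis
qed

lemma diff_in_alg: "A \<in> alg d L X \<Longrightarrow> B \<in> alg d L X \<Longrightarrow> A - B \<in> alg d L X"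
proof -
  assume "A \<in> alg d L X" "B \<in> alg d L X"
  moreover have "A - B = A + opscale (-1) B"
    by (intro ext) (simp add: opscale_def)
  ultimately show ?thesis
    using alg.add alg.scale by metis
qed

lemma sum_in_alg: "(\<And>x. x \<in> Y \<Longrightarrow> f x \<in> alg d L X) \<Longrightarrow> (\<Sum>x\<in>Y. f x) \<in> alg d L X"
  by (induction Y rule: infinite_finite_induct) (auto simp: zero_in_alg intro: alg.add)

lemma Mloc_in_alg: "Mloc d L X \<in> alg d L X"
  unfolding Mloc_def nop_def
  by (intro sum_in_alg alg.scale diff_in_alg alg.mult alg.gen_c alg.gen_cstar)

(* For B in the algebra of X, the operator (\<lambda>S T. g (stag_mag X S - stag_mag X T) * B S T)
   is g(ad_{M_X}) B, as M_X is diagonal. *)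
definition alg_multiplier :: "nat \<Rightarrow> nat \<Rightarrow> site set \<Rightarrow> (real \<Rightarrow> complex) \<Rightarrow> bool" where
  "alg_multiplier d L X g \<longleftrightarrow>
     (\<forall>B\<in>alg d L X. (\<lambda>S T. g (stag_mag X S - stag_mag X T) * B S T) \<in> alg d L X)"

lemma alg_multiplier_const: "alg_multiplier d L X (\<lambda>z. c)"
  unfolding alg_multiplier_def
proof
  fix B
  assume "B \<in> alg d L X"
  moreover have "(\<lambda>S T. c * B S T) = opscale c B"
    by (intro ext) (simp add: opscale_def)
  ultimately show "(\<lambda>S T. c * B S T) \<in> alg d L X"
    using alg.scale by metis
qed

lemma alg_multiplier_of_real:
  assumes "X \<subseteq> Lam d L"
  shows "alg_multiplier d L X of_real"
  unfolding alg_multiplier_def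
proof
  fix B
  assume B: "B \<in> alg d L X"
  have "(\<lambda>S T. of_real (stag_mag X S - stag_mag X T) * B S T) = ad (cfgs d L) (Mloc d L X) B"
  proof (intro ext)
    fix S T
    show "of_real (stag_mag X S - stag_mag X T) * B S T = ad (cfgs d L) (Mloc d L X) B S T"
      unfolding Mloc_eq_diagop[OF assms] ad_diagop[OF finite_cfgs order_refl]
      using alg_local_op[OF B] unfolding local_op_def by (cases "B S T = 0") auto
  qed
  moreover have "ad (cfgs d L) (Mloc d L X) B \<in> alg d L X"
    unfolding ad_def by (intro diff_in_alg alg.mult Mloc_in_alg B)
  ultimately show "(\<lambda>S T. of_real (stag_mag X S - stag_mag X T) * B S T) \<in> alg d L X"
    by simp
qed

lemma alg_multiplier_add:
  assumes "alg_multiplier d L X f" "alg_multiplier d L X g"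
  shows "alg_multiplier d L X (\<lambda>z. f z + g z)"
  unfolding alg_multiplier_def
proof
  fix B
  assume "B \<in> alg d L X"
  then have "(\<lambda>S T. f (stag_mag X S - stag_mag X T) * B S T)
      + (\<lambda>S T. g (stag_mag X S - stag_mag X T) * B S T) \<in> alg d L X"
    using assms unfolding alg_multiplier_def by (blast intro: alg.add)
  then show "(\<lambda>S T. (f (stag_mag X S - stag_mag X T) + g (stag_mag X S - stag_mag X T)) * B S T)
      \<in> alg d L X"
    by (simp add: plus_fun_def distrib_right)
qed

lemma alg_multiplier_mult:
  assumes "alg_multiplier d L X f" "alg_multiplier d L X g"
  shows "alg_multiplier d L X (\<lambda>z. f z * g z)"
  unfolding alg_multiplier_def
proof
  fix B
  assume "B \<in> alg d L X"
  then have gB: "(\<lambda>S T. g (stag_mag X S - stag_mag X T) * B S T) \<in> alg d L X"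
    using assms(2) unfolding alg_multiplier_def by blast
  have "\<forall>B\<in>alg d L X. (\<lambda>S T. f (stag_mag X S - stag_mag X T) * B S T) \<in> alg d L X"
    using assms(1) unfolding alg_multiplier_def .
  from bspec[OF this gB]
  show "(\<lambda>S T. (f (stag_mag X S - stag_mag X T) * g (stag_mag X S - stag_mag X T)) * B S T)
      \<in> alg d L X"
    by (simp add: mult.assoc)
qed

lemma alg_multiplier_sum:
  "(\<And>a. a \<in> Y \<Longrightarrow> alg_multiplier d L X (F a)) \<Longrightarrow> alg_multiplier d L X (\<lambda>z. \<Sum>a\<in>Y. F a z)"
  by (induction Y rule: infinite_finite_induct)
    (auto intro: alg_multiplier_const alg_multiplier_add)

lemma alg_multiplier_prod:
  "(\<And>a. a \<in> Y \<Longrightarrow> alg_multiplier d L X (F a)) \<Longrightarrow> alg_multiplier d L X (\<lambda>z. \<Prod>a\<in>Y. F a z)"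
  by (induction Y rule: infinite_finite_induct)
    (auto intro: alg_multiplier_const alg_multiplier_mult)

lemma alg_multiplier_interpolate:
  fixes f :: "real \<Rightarrow> complex"
  assumes "finite Z" "X \<subseteq> Lam d L"
  obtains g where "alg_multiplier d L X g" "\<And>z. z \<in> Z \<Longrightarrow> g z = f z"
proof
  let ?g = "\<lambda>z. \<Sum>a\<in>Z. f a * (\<Prod>b\<in>Z - {a}. (of_real z - of_real b) / of_real (a - b))"
  have "alg_multiplier d L X
      (\<lambda>z. of_real z * (1 / of_real (a - b)) + (- of_real b / of_real (a - b)))"
    for a b :: real
    by (intro alg_multiplier_add alg_multiplier_mult alg_multiplier_of_real[OF assms(2)]
        alg_multiplier_const)
  then have "alg_multiplier d L X (\<lambda>z. (of_real z - of_real b) / of_real (a - b))" for a b :: real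
    by (simp add: diff_divide_distrib)
  then show "alg_multiplier d L X ?g"
    by (intro alg_multiplier_sum alg_multiplier_mult alg_multiplier_const alg_multiplier_prod)
  fix z
  assume "z \<in> Z"
  have "f a * (\<Prod>b\<in>Z - {a}. (of_real z - of_real b) / of_real (a - b)) = (if a = z then f z else 0)"
    if "a \<in> Z" for a
  proof (cases "a = z")
    case False
    then have "(\<Prod>b\<in>Z - {a}. (complex_of_real z - of_real b) / of_real (a - b)) = 0"
      using \<open>z \<in> Z\<close> assms(1) by (intro prod_zero) auto
    then show ?thesis
      using False by simp
  qed simp
  then show "?g z = f z"
    using \<open>z \<in> Z\<close> assms(1) by (simp add: sum.delta')
qed

lemma Ih_in_alg:
  assumes "X \<subseteq> Lam d L" "A \<in> alg d L X"
    and "\<bar>h\<bar> * real (card X) < real_of_int \<bar>k\<bar> * U"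
  shows "\<exists>B\<in>alg d L X. hfop d L B = Ih d L k h U (hfop d L A)"
proof -
  have A_local: "local_op d L X A"
    using alg_local_op[OF assms(2)] .
  let ?Z = "(\<lambda>(S, T). stag_mag X S - stag_mag X T) ` (cfgs d L \<times> cfgs d L)"
  have "finite ?Z"
    using finite_cfgs by simp
  obtain g where g: "alg_multiplier d L X g"
    and g_eq: "\<And>z. z \<in> ?Z \<Longrightarrow> g z = 1 / of_real (real_of_int k * U - h * z)"
    using alg_multiplier_interpolate[OF \<open>finite ?Z\<close> assms(1),
        where f = "\<lambda>z. 1 / of_real (real_of_int k * U - h * z)"] by blast
  let ?B = "\<lambda>S T. g (stag_mag X S - stag_mag X T) * A S T"
  have "?B \<in> alg d L X"
    using g assms(2) unfolding alg_multiplier_def by blast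
  moreover have "hfop d L ?B = Ih d L k h U (hfop d L A)"
  proof (intro ext)
    fix S T
    show "hfop d L ?B S T = Ih d L k h U (hfop d L A) S T"
      unfolding Ih_eq[OF assms(1) A_local assms(3)]
    proof (cases "A S T = 0")
      case False
      then have "(S, T) \<in> cfgs d L \<times> cfgs d L"
        using A_local unfolding local_op_def by auto
      then have "stag_mag X S - stag_mag X T \<in> ?Z"
        by (rule rev_image_eqI) simp
      then show "hfop d L ?B S T
          = hfop d L A S T / of_real (real_of_int k * U - h * (stag_mag X S - stag_mag X T))"
        using g_eq by (simp add: hfop_def)
    qed (simp add: hfop_def)
  qed
  ultimately show ?thesis
    by blast
qed

section \<open>Operator norm\<close>

definition vnorm :: "cfg set \<Rightarrow> (cfg \<Rightarrow> complex) \<Rightarrow> real" where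
  "vnorm V w = L2_set (\<lambda>S. cmod (w S)) V"

definition opapply :: "cfg set \<Rightarrow> op \<Rightarrow> (cfg \<Rightarrow> complex) \<Rightarrow> cfg \<Rightarrow> complex" where
  "opapply V B v = (\<lambda>S. \<Sum>T\<in>V. B S T * v T)"

lemma opnorm_eq_Sup: "opnorm V B = Sup ((\<lambda>v. vnorm V (opapply V B v)) ` {v. vnorm V v \<le> 1})"
  unfolding opnorm_def vnorm_def opapply_def L2_set_def by simp

lemma vnorm_cong: "(\<And>S. S \<in> V \<Longrightarrow> a S = b S) \<Longrightarrow> vnorm V a = vnorm V b"
  unfolding vnorm_def by (intro L2_set_cong) auto

lemma vnorm_zero [simp]: "vnorm V (\<lambda>S. 0) = 0"
  unfolding vnorm_def by (simp add: L2_set_0')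

lemma vnorm_minus: "vnorm V (\<lambda>S. - w S) = vnorm V w"
  unfolding vnorm_def by simp

lemma vnorm_scale: "vnorm V (\<lambda>S. c * w S) = cmod c * vnorm V w"
  unfolding vnorm_def by (simp add: L2_set_right_distrib norm_mult)

lemma vnorm_mult_le:
  assumes "\<And>S. S \<in> V \<Longrightarrow> cmod (g S) \<le> c" "0 \<le> c"
  shows "vnorm V (\<lambda>S. g S * w S) \<le> c * vnorm V w"
  unfolding vnorm_def L2_set_right_distrib[OF assms(2)]
  by (intro L2_set_mono) (auto simp: norm_mult intro: mult_right_mono assms(1))

lemma vnorm_add_le: "vnorm V (\<lambda>S. a S + b S) \<le> vnorm V a + vnorm V b"
proof -
  have "vnorm V (\<lambda>S. a S + b S) \<le> L2_set (\<lambda>S. cmod (a S) + cmod (b S)) V"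
    unfolding vnorm_def by (intro L2_set_mono norm_triangle_ineq) auto
  also have "\<dots> \<le> vnorm V a + vnorm V b"
    unfolding vnorm_def by (rule L2_set_triangle_ineq)
  finally show ?thesis .
qed

lemma norm_le_vnorm: "finite V \<Longrightarrow> T \<in> V \<Longrightarrow> cmod (v T) \<le> vnorm V v"
  unfolding vnorm_def by (rule member_le_L2_set) auto

lemma bdd_above_opnorm_image:
  assumes "finite V"
  shows "bdd_above ((\<lambda>v. vnorm V (opapply V B v)) ` {v. vnorm V v \<le> 1})"
proof (rule bdd_aboveI2)
  fix v
  assume "v \<in> {v. vnorm V v \<le> 1}"
  then have v_le: "cmod (v T) \<le> 1" if "T \<in> V" for T
    using norm_le_vnorm[OF assms that, of v] by simp
  show "vnorm V (opapply V B v) \<le> L2_set (\<lambda>S. \<Sum>T\<in>V. cmod (B S T)) V"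
    unfolding vnorm_def
  proof (intro L2_set_mono)
    fix S
    have "cmod (opapply V B v S) \<le> (\<Sum>T\<in>V. cmod (B S T * v T))"
      unfolding opapply_def by (rule norm_sum)
    also have "\<dots> \<le> (\<Sum>T\<in>V. cmod (B S T))"
      using v_le by (intro sum_mono) (simp add: norm_mult mult_left_le)
    finally show "cmod (opapply V B v S) \<le> (\<Sum>T\<in>V. cmod (B S T))" .
  qed simp
qed

lemma vnorm_opapply_le_opnorm:
  "finite V \<Longrightarrow> vnorm V v \<le> 1 \<Longrightarrow> vnorm V (opapply V B v) \<le> opnorm V B"
  unfolding opnorm_eq_Sup by (rule cSup_upper[OF _ bdd_above_opnorm_image]) auto

lemma opnorm_nonneg: "finite V \<Longrightarrow> 0 \<le> opnorm V B"
  using vnorm_opapply_le_opnorm[of V "\<lambda>S. 0" B] by (simp add: opapply_def)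

lemma opnorm_leI:
  assumes "\<And>v. vnorm V v \<le> 1 \<Longrightarrow> vnorm V (opapply V B v) \<le> c"
  shows "opnorm V B \<le> c"
  unfolding opnorm_eq_Sup
  by (intro cSup_least) (use assms in \<open>auto intro!: exI[of _ "\<lambda>S. 0"]\<close>)

lemma vnorm_opapply_le:
  assumes "finite V"
  shows "vnorm V (opapply V B v) \<le> opnorm V B * vnorm V v"
proof (cases "vnorm V v = 0")
  case True
  then have "\<forall>T\<in>V. v T = 0"
    unfolding vnorm_def using L2_set_eq_0_iff[OF assms] by auto
  then show ?thesis
    using True by (simp add: opapply_def)
next
  case False
  let ?n = "vnorm V v"
  have "?n > 0"
    using False by (simp add: vnorm_def order_less_le)
  have "vnorm V (\<lambda>T. of_real (1 / ?n) * v T) = 1"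
    unfolding vnorm_scale using \<open>?n > 0\<close> by (simp add: norm_divide)
  then have "vnorm V (opapply V B (\<lambda>T. of_real (1 / ?n) * v T)) \<le> opnorm V B"
    by (intro vnorm_opapply_le_opnorm[OF assms]) simp
  moreover have "opapply V B (\<lambda>T. of_real (1 / ?n) * v T)
      = (\<lambda>S. of_real (1 / ?n) * opapply V B v S)"
    unfolding opapply_def by (intro ext) (simp add: sum_distrib_left algebra_simps)
  ultimately have "cmod (of_real (1 / ?n)) * vnorm V (opapply V B v) \<le> opnorm V B"
    by (simp only: vnorm_scale)
  then show ?thesis
    using \<open>?n > 0\<close> by (simp add: norm_divide divide_le_eq mult.commute)
qed

lemma opnorm_opscale_le:
  assumes "finite V"
  shows "opnorm V (opscale c B) \<le> cmod c * opnorm V B"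
proof (rule opnorm_leI)
  fix v
  assume "vnorm V v \<le> 1"
  have "opapply V (opscale c B) v = (\<lambda>S. c * opapply V B v S)"
    unfolding opapply_def opscale_def by (intro ext) (simp add: sum_distrib_left algebra_simps)
  then show "vnorm V (opapply V (opscale c B) v) \<le> cmod c * opnorm V B"
    using vnorm_opapply_le_opnorm[OF assms \<open>vnorm V v \<le> 1\<close>]
    by (simp add: vnorm_scale mult_left_mono)
qed

lemma opnorm_add_le:
  assumes "finite V"
  shows "opnorm V (B + C) \<le> opnorm V B + opnorm V C"
proof (rule opnorm_leI)
  fix v
  assume v: "vnorm V v \<le> 1"
  have "opapply V (B + C) v = (\<lambda>S. opapply V B v S + opapply V C v S)"
    unfolding opapply_def by (intro ext) (simp add: sum.distrib distrib_right)
  then show "vnorm V (opapply V (B + C) v) \<le> opnorm V B + opnorm V C"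
    using vnorm_add_le[of V "opapply V B v" "opapply V C v"]
      vnorm_opapply_le_opnorm[OF assms v, of B] vnorm_opapply_le_opnorm[OF assms v, of C]
    by simp
qed

lemma opnorm_diag_commutator_le:
  fixes g :: "cfg \<Rightarrow> real"
  assumes "finite V" and g_le: "\<And>S. \<bar>g S\<bar> \<le> c"
  shows "opnorm V (\<lambda>S T. of_real (g S - g T) * B S T) \<le> 2 * c * opnorm V B"
proof (rule opnorm_leI)
  fix v
  assume v: "vnorm V v \<le> 1"
  have "0 \<le> c"
    using g_le order_trans abs_ge_zero by blast
  let ?gv = "\<lambda>T. complex_of_real (g T) * v T"
  have "vnorm V (opapply V (\<lambda>S T. of_real (g S - g T) * B S T) v)
      = vnorm V (\<lambda>S. of_real (g S) * opapply V B v S + - opapply V B ?gv S)"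
    unfolding opapply_def
    by (intro vnorm_cong) (simp add: sum_subtractf sum_distrib_left algebra_simps)
  also have "\<dots> \<le> vnorm V (\<lambda>S. of_real (g S) * opapply V B v S) + vnorm V (opapply V B ?gv)"
    using vnorm_add_le[of V "\<lambda>S. of_real (g S) * opapply V B v S" "\<lambda>S. - opapply V B ?gv S"]
    unfolding vnorm_minus .
  also have "\<dots> \<le> c * opnorm V B + opnorm V B * c"
  proof (rule add_mono)
    have "vnorm V (\<lambda>S. of_real (g S) * opapply V B v S) \<le> c * vnorm V (opapply V B v)"
      using g_le \<open>0 \<le> c\<close> by (intro vnorm_mult_le) auto
    also have "\<dots> \<le> c * opnorm V B"
      using vnorm_opapply_le_opnorm[OF assms(1) v] \<open>0 \<le> c\<close> by (rule mult_left_mono)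
    finally show "vnorm V (\<lambda>S. of_real (g S) * opapply V B v S) \<le> c * opnorm V B" .
    have "vnorm V ?gv \<le> c * vnorm V v"
      using g_le \<open>0 \<le> c\<close> by (intro vnorm_mult_le) auto
    also have "\<dots> \<le> c"
      using v \<open>0 \<le> c\<close> by (simp add: mult_left_le)
    finally have "opnorm V B * vnorm V ?gv \<le> opnorm V B * c"
      by (intro mult_left_mono opnorm_nonneg[OF assms(1)])
    then show "vnorm V (opapply V B ?gv) \<le> opnorm V B * c"
      using vnorm_opapply_le[OF assms(1), of B ?gv] by linarith
  qed
  finally show "vnorm V (opapply V (\<lambda>S T. of_real (g S - g T) * B S T) v) \<le> 2 * c * opnorm V B"
    by simp
qed

lemma opnorm_stag_commutator_le:
  assumes "finite V"
  shows "opnorm V (\<lambda>S T. of_real (stag_mag X S - stag_mag X T) * B S T)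
    \<le> real (card X) * opnorm V B"
  using opnorm_diag_commutator_le[OF assms abs_stag_mag_le[of X], where B = B] by simp

lemma opnorm_stag_power_le:
  assumes "finite V"
  shows "opnorm V (\<lambda>S T. of_real (stag_mag X S - stag_mag X T) ^ n * B S T)
    \<le> real (card X) ^ n * opnorm V B"
proof (induction n)
  case (Suc n)
  have "opnorm V (\<lambda>S T. of_real (stag_mag X S - stag_mag X T) ^ Suc n * B S T)
      \<le> real (card X) * opnorm V (\<lambda>S T. of_real (stag_mag X S - stag_mag X T) ^ n * B S T)"
    using opnorm_stag_commutator_le[OF assms,
        where X = X and B = "\<lambda>S T. of_real (stag_mag X S - stag_mag X T) ^ n * B S T"]
    by (simp add: mult.assoc)
  also have "\<dots> \<le> real (card X) ^ Suc n * opnorm V B"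
    using mult_left_mono[OF Suc.IH, of "real (card X)"] by (simp add: mult.assoc)
  finally show ?case .
qed simp

context
  fixes d L :: nat and X :: "site set" and h U :: real and k :: int and A :: op
  assumes X_sub: "X \<subseteq> Lam d L" and A_local: "local_op d L X A"
    and h_small: "\<bar>h\<bar> * real (card X) < real_of_int \<bar>k\<bar> * U"
begin

lemma kU_pos: "0 < real_of_int \<bar>k\<bar> * U"
  using h_small by (meson abs_ge_zero le_less_trans mult_nonneg_nonneg of_nat_0_le_iff)

lemma abs_kU_eq: "\<bar>real_of_int k * U\<bar> = real_of_int \<bar>k\<bar> * U"
  using kU_pos by (simp add: abs_mult zero_less_mult_iff)

lemma opnorm_Iterm_le:
  "opnorm (hfcfgs d L) (Iterm d L k h U (hfop d L A) n)
    \<le> opnorm (hfcfgs d L) (hfop d L A) / (real_of_int \<bar>k\<bar> * U)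
      * (\<bar>h\<bar> * real (card X) / (real_of_int \<bar>k\<bar> * U)) ^ n"
proof -
  let ?c = "1 / (real_of_int k * U) * (h / (real_of_int k * U)) ^ n"
  have "opnorm (hfcfgs d L) (Iterm d L k h U (hfop d L A) n)
      \<le> cmod (of_real ?c)
        * opnorm (hfcfgs d L) (\<lambda>S T. of_real (stag_mag X S - stag_mag X T) ^ n * hfop d L A S T)"
    unfolding Iterm_def ad_Mop_funpow_hfop[OF X_sub A_local]
    by (rule opnorm_opscale_le[OF finite_hfcfgs])
  also have "\<dots> \<le> \<bar>?c\<bar> * (real (card X) ^ n * opnorm (hfcfgs d L) (hfop d L A))"
    unfolding norm_of_real by (intro mult_left_mono opnorm_stag_power_le[OF finite_hfcfgs]) simp
  also have "\<dots> = opnorm (hfcfgs d L) (hfop d L A) / (real_of_int \<bar>k\<bar> * U)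
      * (\<bar>h\<bar> * real (card X) / (real_of_int \<bar>k\<bar> * U)) ^ n"
    unfolding abs_kU_eq[symmetric] by (simp add: abs_mult power_abs power_divide power_mult_distrib)
  finally show ?thesis .
qed

lemma summable_opnorm_Iterm:
  "summable (\<lambda>n. opnorm (hfcfgs d L) (Iterm d L k h U (hfop d L A) n))"
proof (rule summable_comparison_test)
  have "0 \<le> \<bar>h\<bar> * real (card X) / (real_of_int \<bar>k\<bar> * U)"
    "\<bar>h\<bar> * real (card X) / (real_of_int \<bar>k\<bar> * U) < 1"
    using h_small abs_kU_eq by (auto simp: divide_less_eq)
  then show "summable (\<lambda>n. opnorm (hfcfgs d L) (hfop d L A) / (real_of_int \<bar>k\<bar> * U)
      * (\<bar>h\<bar> * real (card X) / (real_of_int \<bar>k\<bar> * U)) ^ n)"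
    by (intro summable_mult summable_geometric) simp
  show "\<exists>N. \<forall>n\<ge>N. norm (opnorm (hfcfgs d L) (Iterm d L k h U (hfop d L A) n))
      \<le> opnorm (hfcfgs d L) (hfop d L A) / (real_of_int \<bar>k\<bar> * U)
        * (\<bar>h\<bar> * real (card X) / (real_of_int \<bar>k\<bar> * U)) ^ n"
    using opnorm_Iterm_le opnorm_nonneg[OF finite_hfcfgs] by auto
qed

lemma Ih_eq_fixpoint:
  "Ih d L k h U (hfop d L A) = opscale (of_real (1 / (real_of_int k * U)))
    (hfop d L A + opscale (of_real h)
      (\<lambda>S T. of_real (stag_mag X S - stag_mag X T) * Ih d L k h U (hfop d L A) S T))"
proof (intro ext)
  fix S T
  have "real_of_int k * U \<noteq> 0"
    using abs_kU_eq kU_pos by auto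
  moreover have "real_of_int k * U - h * (stag_mag X S - stag_mag X T) \<noteq> 0"
    using abs_mult_stag_mag_diff_less[OF h_small, of S T] by auto
  ultimately show "Ih d L k h U (hfop d L A) S T = opscale (of_real (1 / (real_of_int k * U)))
      (hfop d L A + opscale (of_real h)
        (\<lambda>S T. of_real (stag_mag X S - stag_mag X T) * Ih d L k h U (hfop d L A) S T)) S T"
    unfolding Ih_eq[OF X_sub A_local h_small] opscale_def plus_fun_apply
    by (rule resolvent_eq)
qed

lemma opnorm_Ih_le:
  "opnorm (hfcfgs d L) (Ih d L k h U (hfop d L A))
    \<le> opnorm (hfcfgs d L) (hfop d L A) / (real_of_int \<bar>k\<bar> * U - \<bar>h\<bar> * real (card X))"
proof -
  let ?norm = "opnorm (hfcfgs d L)"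
  let ?I = "Ih d L k h U (hfop d L A)"
  let ?E = "\<lambda>S T. of_real (stag_mag X S - stag_mag X T) * ?I S T"
  let ?c = "complex_of_real (1 / (real_of_int k * U))"
  have "?norm ?I = ?norm (opscale ?c (hfop d L A + opscale (of_real h) ?E))"
    using Ih_eq_fixpoint by (rule arg_cong)
  also have "\<dots> \<le> cmod ?c * ?norm (hfop d L A + opscale (of_real h) ?E)"
    by (rule opnorm_opscale_le[OF finite_hfcfgs])
  also have "\<dots> \<le> cmod ?c * (?norm (hfop d L A) + ?norm (opscale (of_real h) ?E))"
    by (intro mult_left_mono opnorm_add_le[OF finite_hfcfgs]) simp
  also have "\<dots> \<le> cmod ?c * (?norm (hfop d L A) + \<bar>h\<bar> * ?norm ?E)"
    using opnorm_opscale_le[OF finite_hfcfgs, where c = "of_real h" and B = ?E]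
    by (intro mult_left_mono add_left_mono) simp_all
  also have "\<dots> \<le> cmod ?c * (?norm (hfop d L A) + \<bar>h\<bar> * (real (card X) * ?norm ?I))"
    using opnorm_stag_commutator_le[OF finite_hfcfgs, where X = X and B = ?I]
    by (intro mult_left_mono add_left_mono) simp_all
  also have "cmod ?c = 1 / (real_of_int \<bar>k\<bar> * U)"
    unfolding norm_of_real abs_divide abs_kU_eq by simp
  finally have "?norm ?I * (real_of_int \<bar>k\<bar> * U)
      \<le> ?norm (hfop d L A) + \<bar>h\<bar> * real (card X) * ?norm ?I"
    using kU_pos by (simp add: field_simps)
  then have "?norm ?I * (real_of_int \<bar>k\<bar> * U - \<bar>h\<bar> * real (card X)) \<le> ?norm (hfop d L A)"
    by (simp add: algebra_simps)
  then show ?thesis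
    using h_small by (simp add: le_divide_eq)
qed

lemma Ih_adj: "Ih d L (- k) h U (hfop d L (adj A)) = - adj (Ih d L k h U (hfop d L A))"
proof (intro ext)
  fix S T
  have h_small': "\<bar>h\<bar> * real (card X) < real_of_int \<bar>- k\<bar> * U"
    using h_small by simp
  have denom: "real_of_int (- k) * U - h * (stag_mag X S - stag_mag X T)
      = - (real_of_int k * U - h * (stag_mag X T - stag_mag X S))"
    by (simp add: algebra_simps)
  show "Ih d L (- k) h U (hfop d L (adj A)) S T = (- adj (Ih d L k h U (hfop d L A))) S T"
    unfolding Ih_eq[OF X_sub local_op_adj[OF A_local] h_small'] Ih_eq[OF X_sub A_local h_small]
      denom
    unfolding hfop_adj of_real_minus divide_minus_right by (simp add: adj_def)
qed

context
  assumes A_grade: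
    "ad (cfgs d L) (hfop d L (Dop d L)) (hfop d L A) = opscale (of_int k) (hfop d L A)"
begin

lemma double_occ_diff_eq:
  assumes "hfop d L A S T \<noteq> 0"
  shows "int (double_occ d L S) - int (double_occ d L T) = k"
  using A_grade assms
  by (subst (asm) ad_hfop_Dop_eq_scale_iff) (auto simp: hfop_def split: if_splits)

lemma Ih_nonzeroD:
  assumes "Ih d L k h U (hfop d L A) S T \<noteq> 0"
  shows "S \<in> hfcfgs d L" "T \<in> hfcfgs d L" "int (double_occ d L S) - int (double_occ d L T) = k"
proof -
  have "hfop d L A S T \<noteq> 0"
    using assms unfolding Ih_eq[OF X_sub A_local h_small] by auto
  then show "S \<in> hfcfgs d L" "T \<in> hfcfgs d L" "int (double_occ d L S) - int (double_occ d L T) = k"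
    using double_occ_diff_eq by (auto simp: hfop_def split: if_splits)
qed

lemma ad_Dop_Ih:
  "ad (cfgs d L) (hfop d L (Dop d L)) (Ih d L k h U (hfop d L A))
    = opscale (of_int k) (Ih d L k h U (hfop d L A))"
  using Ih_nonzeroD by (subst ad_hfop_Dop_eq_scale_iff) blast+

lemma ad_UD_hM_Ih:
  "ad (cfgs d L)
      (opscale (of_real U) (hfop d L (Dop d L)) - opscale (of_real h) (hfop d L (Mop d L)))
      (Ih d L k h U (hfop d L A))
    = hfop d L A"
proof (intro ext)
  fix S T
  let ?f = "\<lambda>S. U * real (double_occ d L S) - h * stag_mag (Lam d L) S"
  let ?\<delta> = "stag_mag X S - stag_mag X T"
  have diag: "opscale (of_real U) (hfop d L (Dop d L)) - opscale (of_real h) (hfop d L (Mop d L))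
      = diagop (hfcfgs d L) (\<lambda>S. of_real (?f S))"
    unfolding hfop_Dop_eq_diagop Mop_eq_Mloc Mloc_eq_diagop[OF order_refl]
      hfop_diagop[OF hfcfgs_subset_cfgs]
    by (intro ext) (auto simp: opscale_def diagop_def)
  show "ad (cfgs d L)
      (opscale (of_real U) (hfop d L (Dop d L)) - opscale (of_real h) (hfop d L (Mop d L)))
      (Ih d L k h U (hfop d L A)) S T = hfop d L A S T"
  proof (cases "hfop d L A S T = 0")
    case False
    then have "S \<in> hfcfgs d L" "T \<in> hfcfgs d L" "A S T \<noteq> 0"
      unfolding hfop_def by (auto split: if_splits)
    have mag: "stag_mag (Lam d L) S - stag_mag (Lam d L) T = ?\<delta>"
      using X_sub A_local \<open>A S T \<noteq> 0\<close> by (intro stag_mag_diff_eq_local) (auto simp: local_op_def)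
    have occ: "real (double_occ d L S) - real (double_occ d L T) = real_of_int k"
      using double_occ_diff_eq[OF False] by linarith
    have "?f S - ?f T = U * (real (double_occ d L S) - real (double_occ d L T))
        - h * (stag_mag (Lam d L) S - stag_mag (Lam d L) T)"
      by (simp add: algebra_simps)
    also have "\<dots> = real_of_int k * U - h * ?\<delta>"
      unfolding occ mag by (simp add: mult.commute)
    finally have jump: "?f S - ?f T = real_of_int k * U - h * ?\<delta>" .
    have "real_of_int k * U - h * ?\<delta> \<noteq> 0"
      using abs_mult_stag_mag_diff_less[OF h_small, of S T] by auto
    then have "(of_real (?f S) - of_real (?f T))
        * (hfop d L A S T / of_real (real_of_int k * U - h * ?\<delta>)) = hfop d L A S T"
      unfolding of_real_diff[symmetric] jump by (simp del: of_real_diff of_real_mult)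
    then show ?thesis
      unfolding diag ad_diagop[OF finite_cfgs hfcfgs_subset_cfgs] Ih_eq[OF X_sub A_local h_small]
      using \<open>S \<in> hfcfgs d L\<close> \<open>T \<in> hfcfgs d L\<close> by simp
  qed (simp add: diag ad_diagop[OF finite_cfgs hfcfgs_subset_cfgs] Ih_eq[OF X_sub A_local h_small])
qed

lemma diagpart_Ih: "diagpart d L (Ih d L k h U (hfop d L A)) = 0"
proof (intro ext)
  fix S T
  have "k \<noteq> 0"
    using kU_pos by auto
  then show "diagpart d L (Ih d L k h U (hfop d L A)) S T = 0 S T"
    unfolding diagpart_def grade_apply using Ih_nonzeroD[of S T]
    by (cases "Ih d L k h U (hfop d L A) S T = 0") auto
qed

lemma offpart_Ih: "offpart d L (Ih d L k h U (hfop d L A)) = Ih d L k h U (hfop d L A)"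
proof (intro ext)
  fix S T
  let ?I = "Ih d L k h U (hfop d L A)"
  let ?K = "{a - b | a b. a \<in> Dspec d L \<and> b \<in> Dspec d L} - {0}"
  have "{a - b | a b. a \<in> Dspec d L \<and> b \<in> Dspec d L} = (\<lambda>(a, b). a - b) ` (Dspec d L \<times> Dspec d L)"
    by auto
  then have "finite ?K"
    using finite_Dspec by simp
  have "offpart d L ?I S T = (\<Sum>k'\<in>?K. if k' = k then ?I S T else 0)"
    unfolding offpart_def sum_op_apply grade_apply
    using Ih_nonzeroD[of S T] by (intro sum.cong refl) (cases "?I S T = 0"; auto)
  also have "\<dots> = ?I S T"
  proof (cases "?I S T = 0")
    case False
    have "k \<noteq> 0"
      using kU_pos by auto
    then have "k \<in> ?K"
      using Ih_nonzeroD[OF False] double_occ_mem_Dspec by blast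
    then show ?thesis
      using \<open>finite ?K\<close> by simp
  next
    case True
    then show ?thesis
      by (simp only: if_cancel sum.neutral_const)
  qed
  finally show "offpart d L ?I S T = ?I S T" .
qed

end

end

theorem lemmaA2:
  fixes d L :: nat and X :: "site set" and h0 h U :: real and k :: int and A :: op
  assumes "1 \<le> d" and "even L" and "0 < L"
    and "X \<subseteq> Lam d L"
    and "h0 > 0" and "\<bar>h\<bar> \<le> h0" and "U > 0" and "k \<noteq> 0"
    and "A \<in> alg d L X"
    and "grade d L k (hfop d L A) = hfop d L A"
    and "ad (cfgs d L) (hfop d L (Dop d L)) (hfop d L A) = opscale (of_int k) (hfop d L A)"
    and "real_of_int \<bar>k\<bar> * U > h0 * real (card X)"
  shows "summable (\<lambda>n. opnorm (hfcfgs d L) (Iterm d L k h U (hfop d L A) n))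
    \<and> ad (cfgs d L) (opscale (of_real U) (hfop d L (Dop d L)) - opscale (of_real h) (hfop d L (Mop d L)))
          (Ih d L k h U (hfop d L A)) = hfop d L A
    \<and> ad (cfgs d L) (hfop d L (Dop d L)) (Ih d L k h U (hfop d L A))
          = opscale (of_int k) (Ih d L k h U (hfop d L A))
    \<and> diagpart d L (Ih d L k h U (hfop d L A)) = 0
    \<and> offpart d L (Ih d L k h U (hfop d L A)) = Ih d L k h U (hfop d L A)
    \<and> (\<exists>B\<in>alg d L X. hfop d L B = Ih d L k h U (hfop d L A))
    \<and> opnorm (hfcfgs d L) (Ih d L k h U (hfop d L A))
          \<le> opnorm (hfcfgs d L) (hfop d L A) / (real_of_int \<bar>k\<bar> * U - \<bar>h\<bar> * real (card X))
    \<and> opnorm (hfcfgs d L) (hfop d L A) / (real_of_int \<bar>k\<bar> * U - \<bar>h\<bar> * real (card X))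
          \<le> opnorm (hfcfgs d L) (hfop d L A) / (real_of_int \<bar>k\<bar> * U - h0 * real (card X))
    \<and> Ih d L (- k) h U (hfop d L (adj A)) = - adj (Ih d L k h U (hfop d L A))"
proof -
  have A_local: "local_op d L X A"
    using assms(9) by (rule alg_local_op)
  have h_le: "\<bar>h\<bar> * real (card X) \<le> h0 * real (card X)"
    using assms(6) by (intro mult_right_mono) simp_all
  then have h_small: "\<bar>h\<bar> * real (card X) < real_of_int \<bar>k\<bar> * U"
    using assms(12) by linarith
  have "opnorm (hfcfgs d L) (hfop d L A) / (real_of_int \<bar>k\<bar> * U - \<bar>h\<bar> * real (card X))
      \<le> opnorm (hfcfgs d L) (hfop d L A) / (real_of_int \<bar>k\<bar> * U - h0 * real (card X))"
    using h_le h_small assms(12) opnorm_nonneg[OF finite_hfcfgs]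
    by (intro divide_left_mono) (simp_all add: mult_pos_pos)
  then show ?thesis
    using summable_opnorm_Iterm[OF assms(4) A_local h_small]
      ad_UD_hM_Ih[OF assms(4) A_local h_small assms(11)]
      ad_Dop_Ih[OF assms(4) A_local h_small assms(11)]
      diagpart_Ih[OF assms(4) A_local h_small assms(11)]
      offpart_Ih[OF assms(4) A_local h_small assms(11)]
      Ih_in_alg[OF assms(4,9) h_small] opnorm_Ih_le[OF assms(4) A_local h_small]
      Ih_adj[OF assms(4) A_local h_small]
    by blast
qed

end
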